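(* Let $N\ge k$ and let $L=L_0+L_s$ be the generator defined in the context. For $V(x)=\frac{1}{N(N-1)}\sum_{1\le m<n\le N}(x_m-x_n)^2$ one has, for all $x\in\mathbb{R}^N$, $$(LV)(x)=\alpha b_2-\frac{\delta\varkappa}{N(N-1)}V(x),\qquad\text{where } \varkappa=\sum_{j=1}^l k_j^2-k>0 .$$
   Context: Fix an integer $k\ge2$ and integers $k_1,\dots,k_l\ge2$ with $k_1+\dots+k_l=k$ (the "signature", fixed independently of $N$). For $N\ge k$, let $\mathcal I$ be the set of ordered $k$-tuples $(i_1,\dots,i_k)$ of pairwise distinct elements of $\{1,\dots,N\}$. For $(i_1,\dots,i_k)\in\mathcal I$ split it into consecutive blocks $\Gamma_1,\dots,\Gamma_l$ of lengths $k_1,\dots,k_l$: $\Gamma_j=(i_{k_1+\dots+k_{j-1}+1},\dots,i_{k_1+\dots+k_j})$, and let $g_j=i_{k_1+\dots+k_{j-1}+1}$ be the first element of $\Gamma_j$. The synchronization map $J^{(i_1,\dots,i_k)}:\mathbb{R}^N\to\mathbb{R}^N$, $x\mapsto y$, is $y_m=x_m$ if $m\notin\{i_1,\dots,i_k\}$ and $y_m=x_{g_j}$ if $m\in\Gamma_j$. Let $\alpha>0,\delta>0$, and let $\rho$ be a probability measure on $\mathbb{R}$ with compact support and $b_2:=\int z^2\rho(dz)>0$. The generator $L=L_0+L_s$ acts on functions $f:\mathbb{R}^N\to\mathbb{R}$ by $(L_0f)(x)=\alpha\sum_{i=1}^N\int\big(f(x+ze_i)-f(x)\big)\rho(dz)$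 ($e_i$ the $i$-th unit vector) and $(L_sf)(x)=\frac{\delta}{N(N-1)\cdots(N-k+1)}\sum_{(i_1,\dots,i_k)\in\mathcal I}\big(f(J^{(i_1,\dots,i_k)}x)-f(x)\big)$. The function $V$ equals the empirical variance $\frac1{N-1}\sum_m(x_m-M(x))^2$, $M(x)=\frac1N\sum_m x_m$. *)

theory Defs
  imports "HOL-Probability.Probability"
begin

text \<open>Configurations x in R^N are represented as functions nat => real; only the
coordinates 1..N are relevant. Index tuples (i_1,...,i_k) are lists.\<close>

definition index_tuples :: "nat \<Rightarrow> nat \<Rightarrow> nat list set" where
  "index_tuples N k = {is. length is = k \<and> distinct is \<and> set is \<subseteq> {1..N}}"

definition block :: "nat list \<Rightarrow> nat list \<Rightarrow> nat \<Rightarrow> nat list" where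
  "block ks is j = take (ks ! j) (drop (sum_list (take j ks)) is)"

definition sync_map :: "nat list \<Rightarrow> nat list \<Rightarrow> (nat \<Rightarrow> real) \<Rightarrow> (nat \<Rightarrow> real)" where
  "sync_map ks is x = (\<lambda>m.
     if \<exists>j<length ks. m \<in> set (block ks is j)
     then x (hd (block ks is (THE j. j < length ks \<and> m \<in> set (block ks is j))))
     else x m)"

definition L0 :: "real \<Rightarrow> real measure \<Rightarrow> nat \<Rightarrow> ((nat \<Rightarrow> real) \<Rightarrow> real) \<Rightarrow> (nat \<Rightarrow> real) \<Rightarrow> real" where
  "L0 \<alpha> \<rho> N f x = \<alpha> * (\<Sum>i=1..N. \<integral>z. (f (x(i := x i + z)) - f x) \<partial>\<rho>)"

definition Ls :: "real \<Rightarrow> nat list \<Rightarrow> nat \<Rightarrow> ((nat \<Rightarrow> real) \<Rightarrow> real) \<Rightarrow> (nat \<Rightarrow> real) \<Rightarrow> real" where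
  "Ls \<delta> ks N f x = \<delta> / real (\<Prod>i<sum_list ks. N - i) *
     (\<Sum>is\<in>index_tuples N (sum_list ks). f (sync_map ks is x) - f x)"

definition gen :: "real \<Rightarrow> real \<Rightarrow> real measure \<Rightarrow> nat list \<Rightarrow> nat \<Rightarrow> ((nat \<Rightarrow> real) \<Rightarrow> real) \<Rightarrow> (nat \<Rightarrow> real) \<Rightarrow> real" where
  "gen \<alpha> \<delta> \<rho> ks N f x = L0 \<alpha> \<rho> N f x + Ls \<delta> ks N f x"

definition Vfun :: "nat \<Rightarrow> (nat \<Rightarrow> real) \<Rightarrow> real" where
  "Vfun N x = 1 / (real N * (real N - 1)) *
     (\<Sum>n\<in>{1..N}. \<Sum>m\<in>{1..<n}. (x m - x n)^2)"

end

theory Submission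
  imports Defs
begin

text \<open>Up to the factor 2 N (N - 1), V x is Q x = \<Sum>m n. (x m - x n)^2. A jump z at site i changes
  Q by 4 z (N x i - \<Sum>m. x m) + 2 (N - 1) z^2; the linear coefficients sum to zero over the sites,
  which leaves \<alpha> b_2. The synchronisation J copies to each position p of the tuple the coordinate
  at the leader of its block (the position of g_j), so Q (J x) - Q x is a sum of squared differences
  x (i_a) - x (i_b), with a and b ranging over positions and their leaders. Averaged over all
  injective tuples, such a square has mean Q x / (N (N - 1)) if a \<noteq> b and 0 if a = b, so only the
  coincidence pattern of positions and leaders survives; counting it gives \<Sum>j. k_j^2 - k.\<close>

section \<open>Blocks of a signature\<close>

definition block_start :: "nat list \<Rightarrow> nat \<Rightarrow> nat" where
  "block_start ks j = sum_list (take j ks)"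

lemma block_start_Suc: "j < length ks \<Longrightarrow> block_start ks (Suc j) = block_start ks j + ks ! j"
  by (simp add: block_start_def take_Suc_conv_app_nth)

lemma block_start_mono: "j \<le> j' \<Longrightarrow> block_start ks j \<le> block_start ks j'"
  by (metis block_start_def le_Suc_ex le_add1 sum_list_append take_add)

lemma block_end_le_sum_list: "j < length ks \<Longrightarrow> block_start ks j + ks ! j \<le> sum_list ks"
  by (metis block_start_Suc block_start_def append_take_drop_id le_add1 sum_list_append)

lemma block_end_le_block_start: "j < j' \<Longrightarrow> j < length ks \<Longrightarrow> block_start ks j + ks ! j \<le> block_start ks j'"
  by (metis Suc_leI block_start_Suc block_start_mono)

lemma block_start_strict_mono:
  assumes "j < j'" "j < length ks" "\<forall>kj\<in>set ks. kj > 0"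
  shows "block_start ks j < block_start ks j'"
  using block_end_le_block_start[OF assms(1,2)] assms(2,3) nth_mem by fastforce

lemma ex1_block_containing:
  assumes "p < sum_list ks"
  shows "\<exists>!j. j < length ks \<and> block_start ks j \<le> p \<and> p < block_start ks j + ks ! j"
proof (rule ex_ex1I)
  show "\<exists>j. j < length ks \<and> block_start ks j \<le> p \<and> p < block_start ks j + ks ! j"
    using assms
  proof (induction ks arbitrary: p)
    case (Cons a ks)
    show ?case
    proof (cases "p < a")
      case True
      then show ?thesis by (intro exI[of _ 0]) (simp add: block_start_def)
    next
      case False
      with Cons.prems have "p - a < sum_list ks" by simp
      with Cons.IH obtain j where "j < length ks" "block_start ks j \<le> p - a" "p - a < block_start ks j + ks ! j"
        by blast
      with False show ?thesis by (intro exI[of _ "Suc j"]) (auto simp: block_start_def)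
    qed
  qed simp
next
  have "\<not> j < j'" if "j < length ks" "p < block_start ks j + ks ! j" "block_start ks j' \<le> p" for j j'
    using that block_end_le_block_start[of j j' ks] by linarith
  then show "j = j'"
    if "j < length ks \<and> block_start ks j \<le> p \<and> p < block_start ks j + ks ! j"
       "j' < length ks \<and> block_start ks j' \<le> p \<and> p < block_start ks j' + ks ! j'" for j j'
    using that by (meson nat_neq_iff)
qed

definition block_index :: "nat list \<Rightarrow> nat \<Rightarrow> nat" where
  "block_index ks p = (THE j. j < length ks \<and> block_start ks j \<le> p \<and> p < block_start ks j + ks ! j)"

text \<open>The leader of position p is the position of g_j in the block \<Gamma>_j containing p.\<close>

definition block_leader :: "nat list \<Rightarrow> nat \<Rightarrow> nat" where
  "block_leader ks p = block_start ks (block_index ks p)"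

lemma block_index_eq:
  "j < length ks \<Longrightarrow> block_start ks j \<le> p \<Longrightarrow> p < block_start ks j + ks ! j \<Longrightarrow> block_index ks p = j"
proof -
  assume j: "j < length ks" "block_start ks j \<le> p" "p < block_start ks j + ks ! j"
  then have "p < sum_list ks" using block_end_le_sum_list[OF j(1)] by linarith
  with j show ?thesis
    unfolding block_index_def by (intro the1_equality ex1_block_containing) auto
qed

lemma block_index_bounds:
  assumes "p < sum_list ks"
  shows "block_index ks p < length ks \<and> block_start ks (block_index ks p) \<le> p
    \<and> p < block_start ks (block_index ks p) + ks ! block_index ks p"
  unfolding block_index_def by (rule theI'[OF ex1_block_containing[OF assms]])

lemma block_leader_less: "p < sum_list ks \<Longrightarrow> block_leader ks p < sum_list ks"
  unfolding block_leader_def using block_index_bounds by (meson le_less_trans)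

lemma block_index_vimage:
  assumes "j < length ks"
  shows "{p\<in>{..<sum_list ks}. block_index ks p = j} = {block_start ks j..<block_start ks j + ks ! j}"
proof (intro set_eqI iffI)
  fix p assume "p \<in> {p\<in>{..<sum_list ks}. block_index ks p = j}"
  then show "p \<in> {block_start ks j..<block_start ks j + ks ! j}"
    using block_index_bounds[of p ks] by auto
next
  fix p assume "p \<in> {block_start ks j..<block_start ks j + ks ! j}"
  then show "p \<in> {p\<in>{..<sum_list ks}. block_index ks p = j}"
    using block_index_eq[OF assms, of p] block_end_le_sum_list[OF assms] by auto
qed

lemma block_leader_eq_iff:
  assumes "p < sum_list ks" "q < sum_list ks" "\<forall>kj\<in>set ks. kj > 0"
  shows "block_leader ks p = block_leader ks q \<longleftrightarrow> block_index ks p = block_index ks q"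
proof
  assume leader: "block_leader ks p = block_leader ks q"
  have "block_start ks i \<noteq> block_start ks j" if "i < j" "j < length ks" for i j
    using block_start_strict_mono[OF that(1) _ assms(3)] that by simp
  then show "block_index ks p = block_index ks q"
    using leader block_index_bounds[OF assms(1)] block_index_bounds[OF assms(2)]
    unfolding block_leader_def by (metis linorder_neqE_nat)
qed (simp add: block_leader_def)

lemma sum_block_leader_coincidences:
  assumes "\<forall>kj\<in>set ks. kj > 0"
  shows "(\<Sum>q<sum_list ks. \<Sum>p<sum_list ks. of_bool (block_leader ks q = block_leader ks p) :: real)
    = (\<Sum>kj\<leftarrow>ks. real kj ^ 2)"
proof -
  let ?k = "sum_list ks"
  have "(\<Sum>p<?k. of_bool (block_leader ks q = block_leader ks p) :: real) = real (ks ! block_index ks q)"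
    if q: "q < ?k" for q
  proof -
    have "{..<?k} \<inter> {p. block_leader ks q = block_leader ks p} = {p\<in>{..<?k}. block_index ks p = block_index ks q}"
      using block_leader_eq_iff[OF q _ assms] by (auto simp: eq_commute[of "block_index ks q"])
    then show ?thesis
      using block_index_vimage[of "block_index ks q" ks] block_index_bounds[OF q] by simp
  qed
  then have "(\<Sum>q<?k. \<Sum>p<?k. of_bool (block_leader ks q = block_leader ks p) :: real)
      = (\<Sum>q<?k. real (ks ! block_index ks q))"
    by simp
  also have "\<dots> = (\<Sum>j<length ks. \<Sum>q\<in>{q\<in>{..<?k}. block_index ks q = j}. real (ks ! block_index ks q))"
  proof -
    have "block_index ks ` {..<?k} \<subseteq> {..<length ks}" using block_index_bounds by auto
    from sum.group[OF finite_lessThan finite_lessThan this] show ?thesis by (rule sym)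
  qed
  also have "\<dots> = (\<Sum>j<length ks. real (ks ! j) ^ 2)"
  proof (intro sum.cong refl)
    fix j assume "j \<in> {..<length ks}"
    then have j: "j < length ks" by simp
    have "(\<Sum>q\<in>{q\<in>{..<?k}. block_index ks q = j}. real (ks ! block_index ks q))
        = (\<Sum>q\<in>{q\<in>{..<?k}. block_index ks q = j}. real (ks ! j))"
      by (rule sum.cong) auto
    also have "\<dots> = real (ks ! j) ^ 2"
      unfolding block_index_vimage[OF j] by (simp add: power2_eq_square)
    finally show "(\<Sum>q\<in>{q\<in>{..<?k}. block_index ks q = j}. real (ks ! block_index ks q)) = real (ks ! j) ^ 2" .
  qed
  also have "\<dots> = (\<Sum>kj\<leftarrow>ks. real kj ^ 2)"
    by (simp add: sum_list_sum_nth atLeast0LessThan)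
  finally show ?thesis .
qed

lemma sum_block_leader_pattern:
  assumes "\<forall>kj\<in>set ks. kj > 0"
  shows "(\<Sum>q<sum_list ks. \<Sum>p<sum_list ks.
      of_bool (block_leader ks q = block_leader ks p) - of_bool (block_leader ks q = p)
      - of_bool (q = block_leader ks p) + of_bool (q = p) :: real)
    = (\<Sum>kj\<leftarrow>ks. real kj ^ 2) - real (sum_list ks)"
proof -
  let ?k = "sum_list ks"
  have "(\<Sum>q<?k. \<Sum>p<?k. of_bool (block_leader ks q = p) :: real) = real ?k"
    using block_leader_less by simp
  moreover have "(\<Sum>q<?k. \<Sum>p<?k. of_bool (q = block_leader ks p) :: real) = real ?k"
    using block_leader_less by (subst sum.swap) simp
  ultimately show ?thesis
    using sum_block_leader_coincidences[OF assms] by (simp add: sum.distrib sum_subtractf)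
qed

section \<open>The synchronisation map\<close>

lemma set_block_conv_nth:
  assumes "length is = sum_list ks" "j < length ks"
  shows "m \<in> set (block ks is j)
    \<longleftrightarrow> (\<exists>p. block_start ks j \<le> p \<and> p < block_start ks j + ks ! j \<and> m = is ! p)"
proof -
  have len: "length (block ks is j) = ks ! j"
    and nth: "i < ks ! j \<Longrightarrow> block ks is j ! i = is ! (block_start ks j + i)" for i
    using block_end_le_sum_list[OF assms(2)] assms(1)
    by (simp_all add: block_def block_start_def[symmetric])
  show ?thesis
  proof
    assume "m \<in> set (block ks is j)"
    then obtain i where "i < ks ! j" "m = block ks is j ! i" by (metis in_set_conv_nth len)
    then show "\<exists>p. block_start ks j \<le> p \<and> p < block_start ks j + ks ! j \<and> m = is ! p"
      using nth by (intro exI[of _ "block_start ks j + i"]) auto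
  next
    assume "\<exists>p. block_start ks j \<le> p \<and> p < block_start ks j + ks ! j \<and> m = is ! p"
    then obtain p where p: "block_start ks j \<le> p" "p < block_start ks j + ks ! j" "m = is ! p" by blast
    then have "m = block ks is j ! (p - block_start ks j)" using nth[of "p - block_start ks j"] by simp
    then show "m \<in> set (block ks is j)" using p len by simp
  qed
qed

lemma hd_block:
  assumes "length is = sum_list ks" "j < length ks" "ks ! j > 0"
  shows "hd (block ks is j) = is ! block_start ks j"
  using block_end_le_sum_list[OF assms(2)] assms
  by (simp add: block_def block_start_def[symmetric] hd_drop_conv_nth)

lemma sync_map_nth:
  assumes "is \<in> index_tuples N (sum_list ks)" "\<forall>kj\<in>set ks. kj > 0" "p < sum_list ks"
  shows "sync_map ks is x (is ! p) = x (is ! block_leader ks p)"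
proof -
  have len: "length is = sum_list ks" and dist: "distinct is"
    using assms(1) by (auto simp: index_tuples_def)
  let ?j = "block_index ks p"
  have j: "?j < length ks" "block_start ks ?j \<le> p" "p < block_start ks ?j + ks ! ?j"
    using block_index_bounds[OF assms(3)] by auto
  have mem: "is ! p \<in> set (block ks is ?j)"
    unfolding set_block_conv_nth[OF len j(1)] using j(2,3) by blast
  have uniq: "j' = ?j" if j': "j' < length ks" "is ! p \<in> set (block ks is j')" for j'
  proof -
    from j'(2) obtain q where q: "block_start ks j' \<le> q" "q < block_start ks j' + ks ! j'" "is ! p = is ! q"
      unfolding set_block_conv_nth[OF len j'(1)] by blast
    have "q < length is" using q(2) block_end_le_sum_list[OF j'(1)] len by linarith
    then have "q = p" using q(3) dist assms(3) len by (simp add: nth_eq_iff_index_eq)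
    then show ?thesis using q j'(1) by (intro block_index_eq[symmetric]) auto
  qed
  have "(THE j. j < length ks \<and> is ! p \<in> set (block ks is j)) = ?j"
  proof (rule the_equality)
    show "?j < length ks \<and> is ! p \<in> set (block ks is ?j)" using j(1) mem by simp
  qed (use uniq in blast)
  moreover have "\<exists>j<length ks. is ! p \<in> set (block ks is j)" using j(1) mem by blast
  moreover have "hd (block ks is ?j) = is ! block_leader ks p"
    using hd_block[OF len j(1)] assms(2) j(1) by (simp add: block_leader_def)
  ultimately show ?thesis unfolding sync_map_def by simp
qed

lemma sync_map_notin: "m \<notin> set is \<Longrightarrow> sync_map ks is x m = x m"
proof -
  assume "m \<notin> set is"
  then have "m \<notin> set (block ks is j)" for j
    unfolding block_def using in_set_dropD in_set_takeD by fast
  then show ?thesis unfolding sync_map_def by auto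
qed

lemma sum_sync_map:
  fixes F :: "real \<Rightarrow> real"
  assumes "is \<in> index_tuples N (sum_list ks)" "\<forall>kj\<in>set ks. kj > 0"
  shows "(\<Sum>m\<in>{1..N}. F (sync_map ks is x m)) = (\<Sum>m\<in>{1..N}. F (x m))
    + (\<Sum>p<sum_list ks. F (x (is ! block_leader ks p)) - F (x (is ! p)))"
proof -
  have len: "length is = sum_list ks" and dist: "distinct is" and sub: "set is \<subseteq> {1..N}"
    using assms(1) by (auto simp: index_tuples_def)
  have "(\<Sum>m\<in>{1..N}. F (sync_map ks is x m) - F (x m))
      = (\<Sum>m\<in>set is. F (sync_map ks is x m) - F (x m))"
    by (rule sum.mono_neutral_right) (use sub sync_map_notin in auto)
  also have "\<dots> = (\<Sum>p<sum_list ks. F (sync_map ks is x (is ! p)) - F (x (is ! p)))"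
    using sum.distinct_set_conv_list[OF dist] len by (simp add: sum_list_sum_nth atLeast0LessThan)
  also have "\<dots> = (\<Sum>p<sum_list ks. F (x (is ! block_leader ks p)) - F (x (is ! p)))"
    using sync_map_nth[OF assms] by simp
  finally show ?thesis by (simp add: sum_subtractf)
qed

section \<open>Sums over injective tuples\<close>

lemma finite_index_tuples: "finite (index_tuples N k)"
proof -
  have "index_tuples N k \<subseteq> {xs. set xs \<subseteq> {1..N} \<and> length xs = k}"
    by (auto simp: index_tuples_def)
  then show ?thesis using finite_lists_length_eq[of "{1..N}" k] finite_subset by blast
qed

lemma card_index_tuples:
  assumes "k \<le> N"
  shows "card (index_tuples N k) = (\<Prod>i<k. N - i)"
proof -
  have "card (index_tuples N k) = \<Prod>{N - k + 1..N}"
    using card_lists_distinct_length_eq[of "{1..N}" k] assms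
    by (simp add: index_tuples_def conj_commute)
  also have "\<dots> = (\<Prod>i<k. N - i)"
    using assms
  proof (induction k)
    case (Suc k)
    then have "{N - Suc k + 1..N} = insert (N - k) {N - k + 1..N}" by auto
    with Suc show ?case by (simp add: mult.commute)
  qed simp
  finally show ?thesis .
qed

lemma ex_inj_self_map_pair:
  assumes "a \<in> S" "b \<in> S" "a' \<in> S" "b' \<in> S" "a \<noteq> b" "a' \<noteq> b'"
  shows "\<exists>\<tau>. inj \<tau> \<and> \<tau> ` S \<subseteq> S \<and> \<tau> a = a' \<and> \<tau> b = b'"
proof -
  define t where "t = Transposition.transpose a a'"
  define \<tau> where "\<tau> = Transposition.transpose (t b) b' \<circ> t"
  have "t b \<noteq> a'" "t b \<in> S" using assms unfolding t_def by (auto simp: Transposition.transpose_def)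
  then have "\<tau> ` S \<subseteq> S" "\<tau> a = a'" using assms unfolding \<tau>_def t_def by (auto simp: Transposition.transpose_def)
  moreover have "inj \<tau>" "\<tau> b = b'" unfolding \<tau>_def t_def by (simp_all add: inj_compose)
  ultimately show ?thesis by blast
qed

lemma card_index_tuples_pair_le:
  assumes "a \<in> {1..N}" "b \<in> {1..N}" "a' \<in> {1..N}" "b' \<in> {1..N}" "a \<noteq> b" "a' \<noteq> b'" "p < k" "q < k"
  shows "card {is\<in>index_tuples N k. is ! p = a \<and> is ! q = b}
    \<le> card {is\<in>index_tuples N k. is ! p = a' \<and> is ! q = b'}"
proof -
  obtain \<tau> where \<tau>: "inj \<tau>" "\<tau> ` {1..N} \<subseteq> {1..N}" "\<tau> a = a'" "\<tau> b = b'"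
    using ex_inj_self_map_pair[OF assms(1-6)] by blast
  show ?thesis
  proof (rule card_inj_on_le)
    show "inj_on (map \<tau>) {is\<in>index_tuples N k. is ! p = a \<and> is ! q = b}"
      using \<tau>(1) by (auto simp: inj_on_def inj_map_eq_map)
    show "map \<tau> ` {is\<in>index_tuples N k. is ! p = a \<and> is ! q = b}
        \<subseteq> {is\<in>index_tuples N k. is ! p = a' \<and> is ! q = b'}"
    proof
      fix ys assume "ys \<in> map \<tau> ` {is\<in>index_tuples N k. is ! p = a \<and> is ! q = b}"
      then obtain xs where xs: "xs \<in> index_tuples N k" "xs ! p = a" "xs ! q = b" "ys = map \<tau> xs"
        by blast
      then have "set ys \<subseteq> {1..N}" using \<tau>(2) by (auto simp: index_tuples_def)
      with xs \<tau> assms(7,8) show "ys \<in> {is\<in>index_tuples N k. is ! p = a' \<and> is ! q = b'}"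
        by (auto simp: index_tuples_def distinct_map inj_on_subset[OF \<tau>(1)])
    qed
  qed (simp add: finite_index_tuples)
qed

text \<open>Mapping tuples by an injection of the sites that moves one pair of sites to another shows that
  all fibres of is \<mapsto> (is ! p, is ! q) have the same size.\<close>

lemma sum_index_tuples_pair:
  fixes g :: "nat \<Rightarrow> nat \<Rightarrow> real"
  assumes "p < k" "q < k" "p \<noteq> q" "N \<ge> 2"
  shows "(\<Sum>is\<in>index_tuples N k. g (is ! p) (is ! q)) =
     real (card (index_tuples N k)) / (real N * (real N - 1)) * (\<Sum>a\<in>{1..N}. \<Sum>b\<in>{1..N}-{a}. g a b)"
proof -
  let ?T = "index_tuples N k"
  let ?P = "Sigma {1..N} (\<lambda>a. {1..N}-{a})"
  let ?f = "\<lambda>is. (is ! p, is ! q)"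
  define c where "c = card {is\<in>?T. is ! p = 1 \<and> is ! q = 2}"
  have fibre: "card {is\<in>?T. ?f is = ab} = c" if "ab \<in> ?P" for ab
  proof -
    obtain a b where ab: "ab = (a, b)" "a \<in> {1..N}" "b \<in> {1..N}" "a \<noteq> b"
      using \<open>ab \<in> ?P\<close> by (cases ab) auto
    have "1 \<in> {1..N}" "2 \<in> {1..N}" using assms(4) by auto
    then show ?thesis
      unfolding c_def ab(1)
      using card_index_tuples_pair_le[of a N b 1 2 p k q] card_index_tuples_pair_le[of 1 N 2 a b p k q]
        ab assms(1,2)
      by (intro antisym) auto
  qed
  have img: "?f ` ?T \<subseteq> ?P"
    using assms(1-3) by (auto simp: index_tuples_def nth_eq_iff_index_eq)
  have "(\<Sum>is\<in>?T. g (is ! p) (is ! q)) = (\<Sum>ab\<in>?P. \<Sum>is\<in>{is\<in>?T. ?f is = ab}. g (is ! p) (is ! q))"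
    by (rule sum.group[symmetric, OF finite_index_tuples _ img]) auto
  also have "\<dots> = (\<Sum>ab\<in>?P. real c * g (fst ab) (snd ab))"
  proof (rule sum.cong[OF refl])
    fix ab assume "ab \<in> ?P"
    have "(\<Sum>is\<in>{is\<in>?T. ?f is = ab}. g (is ! p) (is ! q)) = (\<Sum>is\<in>{is\<in>?T. ?f is = ab}. g (fst ab) (snd ab))"
      by (rule sum.cong) auto
    then show "(\<Sum>is\<in>{is\<in>?T. ?f is = ab}. g (is ! p) (is ! q)) = real c * g (fst ab) (snd ab)"
      using fibre[OF \<open>ab \<in> ?P\<close>] by simp
  qed
  also have "\<dots> = real c * (\<Sum>a\<in>{1..N}. \<Sum>b\<in>{1..N}-{a}. g a b)"
    by (simp add: sum.Sigma sum_distrib_left split_beta)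
  finally have sum_eq: "(\<Sum>is\<in>?T. g (is ! p) (is ! q)) = real c * (\<Sum>a\<in>{1..N}. \<Sum>b\<in>{1..N}-{a}. g a b)" .
  have "card ?T = (\<Sum>ab\<in>?P. card {is\<in>?T. ?f is = ab})"
    using sum.group[OF finite_index_tuples _ img, of "\<lambda>_. 1::nat"] by simp
  also have "\<dots> = c * (N * (N - 1))" using fibre by (simp add: card_SigmaI)
  finally have "real c = real (card ?T) / (real N * (real N - 1))"
    using assms(4) by (simp add: of_nat_diff)
  with sum_eq show ?thesis by simp
qed

lemma sum_index_tuples_nth_eq:
  fixes f :: "nat \<Rightarrow> real"
  assumes "p < k" "q < k" "k \<ge> 2" "N \<ge> 2"
  shows "(\<Sum>is\<in>index_tuples N k. f (is ! p)) = (\<Sum>is\<in>index_tuples N k. f (is ! q))"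
proof -
  have "(\<Sum>is\<in>index_tuples N k. f (is ! r)) =
      real (card (index_tuples N k)) / (real N * (real N - 1)) * (\<Sum>a\<in>{1..N}. \<Sum>b\<in>{1..N}-{a}. f a)"
    if "r < k" for r
  proof -
    define r' where "r' = (if r = 0 then 1 else 0::nat)"
    have "r' < k" "r \<noteq> r'" using assms(3) unfolding r'_def by auto
    from sum_index_tuples_pair[OF \<open>r < k\<close> this assms(4), of "\<lambda>a b. f a"] show ?thesis .
  qed
  with assms(1,2) show ?thesis by simp
qed

section \<open>The sum of squared differences\<close>

definition sq_diff_sum :: "nat \<Rightarrow> (nat \<Rightarrow> real) \<Rightarrow> real" where
  "sq_diff_sum N x = (\<Sum>m\<in>{1..N}. \<Sum>n\<in>{1..N}. (x m - x n)^2)"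

lemma Vfun_eq_sq_diff_sum: "Vfun N x = sq_diff_sum N x / (2 * (real N * (real N - 1)))"
proof -
  have twice: "2 * (\<Sum>n\<in>{1..N}. \<Sum>m\<in>{1..<n}. (x m - x n)^2) = sq_diff_sum N x"
  proof (induction N)
    case (Suc N)
    have "{1..<Suc N} = {1..N}" by auto
    moreover have "(\<Sum>m\<in>{1..N}. (x (Suc N) - x m)^2) = (\<Sum>m\<in>{1..N}. (x m - x (Suc N))^2)"
      by (simp add: power2_commute)
    ultimately show ?case
      using Suc by (simp add: sq_diff_sum_def sum.distrib distrib_left)
  qed (simp add: sq_diff_sum_def)
  show ?thesis unfolding Vfun_def twice[symmetric] by simp
qed

lemma sq_diff_sum_conv_moments:
  "sq_diff_sum N x = 2 * real N * (\<Sum>m\<in>{1..N}. (x m)^2) - 2 * (\<Sum>m\<in>{1..N}. x m)^2"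
proof -
  let ?S = "{1..N}"
  have "sq_diff_sum N x = (\<Sum>m\<in>?S. \<Sum>n\<in>?S. (x m)^2 + (x n)^2 - 2 * (x m * x n))"
    unfolding sq_diff_sum_def power2_diff by (simp only: mult.assoc)
  also have "\<dots> = (\<Sum>m\<in>?S. \<Sum>n\<in>?S. (x m)^2) + (\<Sum>m\<in>?S. \<Sum>n\<in>?S. (x n)^2)
      - 2 * (\<Sum>m\<in>?S. \<Sum>n\<in>?S. x m * x n)"
    by (simp add: sum.distrib sum_subtractf sum_distrib_left)
  also have "(\<Sum>m\<in>?S. \<Sum>n\<in>?S. x m * x n) = (\<Sum>m\<in>?S. x m)^2"
    by (simp add: power2_eq_square sum_product)
  finally show ?thesis by (simp add: sum_distrib_left mult.assoc)
qed

lemma sq_diff_sum_update: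
  assumes "i \<in> {1..N}"
  shows "sq_diff_sum N (x(i := x i + z)) - sq_diff_sum N x
    = 4 * z * (real N * x i - (\<Sum>m\<in>{1..N}. x m)) + 2 * (real N - 1) * z^2"
proof -
  have upd: "x(i := x i + z) = (\<lambda>m. x m + (if m = i then z else 0))" by auto
  have "(\<Sum>m\<in>{1..N}. x m + (if m = i then z else 0)) = (\<Sum>m\<in>{1..N}. x m) + z"
    using assms by (simp add: sum.distrib)
  moreover have "(\<Sum>m\<in>{1..N}. (x m + (if m = i then z else 0))^2)
      = (\<Sum>m\<in>{1..N}. (x m)^2 + (if m = i then 2 * z * x i + z^2 else 0))"
    by (rule sum.cong) (auto simp: power2_sum)
  ultimately show ?thesis
    using assms unfolding sq_diff_sum_conv_moments upd
    by (simp add: sum.distrib power2_sum algebra_simps)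
qed

lemma sum_index_tuples_sq_diff:
  fixes x :: "nat \<Rightarrow> real"
  assumes "p < k" "q < k" "N \<ge> 2"
  shows "(\<Sum>is\<in>index_tuples N k. (x (is ! p) - x (is ! q))^2) =
    of_bool (p \<noteq> q) * (real (card (index_tuples N k)) / (real N * (real N - 1)) * sq_diff_sum N x)"
proof (cases "p = q")
  case False
  have "(\<Sum>a\<in>{1..N}. \<Sum>b\<in>{1..N}-{a}. (x a - x b)^2) = sq_diff_sum N x"
    unfolding sq_diff_sum_def by (rule sum.cong[OF refl]) (simp add: sum_diff1)
  with sum_index_tuples_pair[OF assms(1,2) False assms(3), of "\<lambda>a b. (x a - x b)^2"] False
  show ?thesis by simp
qed simp

lemma sq_diff_sum_sync_map:
  fixes x :: "nat \<Rightarrow> real"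
  assumes "is \<in> index_tuples N (sum_list ks)" "\<forall>kj\<in>set ks. kj > 0"
  defines "u \<equiv> \<lambda>p. x (is ! block_leader ks p)" and "v \<equiv> \<lambda>p. x (is ! p)"
  shows "sq_diff_sum N (sync_map ks is x) = sq_diff_sum N x
    + 2 * (\<Sum>p<sum_list ks. \<Sum>m\<in>{1..N}. (x m - u p)^2 - (x m - v p)^2)
    + (\<Sum>q<sum_list ks. \<Sum>p<sum_list ks. (u q - u p)^2 - (u q - v p)^2 - (v q - u p)^2 + (v q - v p)^2)"
proof -
  let ?y = "sync_map ks is x"
  let ?k = "sum_list ks"
  define F where "F = (\<lambda>t. (\<Sum>n\<in>{1..N}. (t - x n)^2) + (\<Sum>p<?k. (t - u p)^2 - (t - v p)^2))"
  have "(\<Sum>n\<in>{1..N}. (t - ?y n)^2) = F t" for t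
    using sum_sync_map[OF assms(1,2), of "\<lambda>s. (t - s)^2" x] unfolding F_def u_def v_def by simp
  then have "sq_diff_sum N ?y = (\<Sum>m\<in>{1..N}. F (?y m))"
    unfolding sq_diff_sum_def by simp
  also have "\<dots> = (\<Sum>m\<in>{1..N}. F (x m)) + (\<Sum>q<?k. F (u q) - F (v q))"
    using sum_sync_map[OF assms(1,2), of F x] unfolding u_def v_def by simp
  also have "(\<Sum>m\<in>{1..N}. F (x m))
      = sq_diff_sum N x + (\<Sum>p<?k. \<Sum>m\<in>{1..N}. (x m - u p)^2 - (x m - v p)^2)"
    unfolding F_def sq_diff_sum_def by (simp add: sum.distrib sum.swap[of _ "{..<?k}"])
  also have "(\<Sum>q<?k. F (u q) - F (v q)) = (\<Sum>q<?k. \<Sum>n\<in>{1..N}. (u q - x n)^2 - (v q - x n)^2)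
    + (\<Sum>q<?k. \<Sum>p<?k. (u q - u p)^2 - (u q - v p)^2 - (v q - u p)^2 + (v q - v p)^2)"
    unfolding F_def by (simp add: sum.distrib sum_subtractf diff_add_eq diff_diff_eq2 add_diff_eq)
  also have "(\<Sum>q<?k. \<Sum>n\<in>{1..N}. (u q - x n)^2 - (v q - x n)^2)
      = (\<Sum>p<?k. \<Sum>m\<in>{1..N}. (x m - u p)^2 - (x m - v p)^2)"
    by (simp add: power2_commute)
  finally show ?thesis by simp
qed

lemma sum_sq_diff_sum_sync_map:
  fixes x :: "nat \<Rightarrow> real"
  assumes "\<forall>kj\<in>set ks. kj > 0" "sum_list ks \<ge> 2" "N \<ge> 2"
  defines "T \<equiv> index_tuples N (sum_list ks)"
  shows "(\<Sum>is\<in>T. sq_diff_sum N (sync_map ks is x)) = real (card T) * sq_diff_sum N x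
    - ((\<Sum>kj\<leftarrow>ks. real kj ^ 2) - real (sum_list ks))
      * (real (card T) / (real N * (real N - 1)) * sq_diff_sum N x)"
proof -
  let ?k = "sum_list ks"
  let ?l = "block_leader ks"
  define D where "D = real (card T) / (real N * (real N - 1)) * sq_diff_sum N x"
  define u where "u = (\<lambda>is p. x (is ! ?l p))"
  define v where "v = (\<lambda>is p. x (is ! p))"
  define A where "A = (\<lambda>is. \<Sum>p<?k. \<Sum>m\<in>{1..N}. (x m - u is p)^2 - (x m - v is p)^2)"
  define C where "C = (\<lambda>is. \<Sum>q<?k. \<Sum>p<?k.
    (u is q - u is p)^2 - (u is q - v is p)^2 - (v is q - u is p)^2 + (v is q - v is p)^2)"
  have "(\<Sum>is\<in>T. sq_diff_sum N (sync_map ks is x)) = (\<Sum>is\<in>T. sq_diff_sum N x + 2 * A is + C is)"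
    unfolding A_def C_def u_def v_def T_def
    using sq_diff_sum_sync_map[OF _ assms(1)] by (intro sum.cong) auto
  also have "\<dots> = real (card T) * sq_diff_sum N x + 2 * (\<Sum>is\<in>T. A is) + (\<Sum>is\<in>T. C is)"
    by (simp add: sum.distrib flip: sum_distrib_left)
  also have "(\<Sum>is\<in>T. A is)
      = (\<Sum>p<?k. \<Sum>m\<in>{1..N}. (\<Sum>is\<in>T. (x m - u is p)^2) - (\<Sum>is\<in>T. (x m - v is p)^2))"
    unfolding A_def by (simp add: sum_subtractf sum.swap[of _ T])
  also have "\<dots> = 0"
  proof (intro sum.neutral ballI)
    fix p m assume "p \<in> {..<?k}"
    then have p: "p < ?k" by simp
    show "(\<Sum>is\<in>T. (x m - u is p)^2) - (\<Sum>is\<in>T. (x m - v is p)^2) = 0"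
      unfolding u_def v_def T_def
      using sum_index_tuples_nth_eq[OF block_leader_less[OF p] p assms(2,3)] by simp
  qed
  also have "(\<Sum>is\<in>T. C is) = (\<Sum>q<?k. \<Sum>p<?k. (\<Sum>is\<in>T. (u is q - u is p)^2)
      - (\<Sum>is\<in>T. (u is q - v is p)^2) - (\<Sum>is\<in>T. (v is q - u is p)^2) + (\<Sum>is\<in>T. (v is q - v is p)^2))"
    unfolding C_def by (simp add: sum.distrib sum_subtractf sum.swap[of _ T])
  also have "\<dots> = (\<Sum>q<?k. \<Sum>p<?k. - D * (of_bool (?l q = ?l p) - of_bool (?l q = p)
      - of_bool (q = ?l p) + of_bool (q = p)))"
  proof (intro sum.cong refl)
    fix q p assume "q \<in> {..<?k}" "p \<in> {..<?k}"
    then have q: "q < ?k" and p: "p < ?k" and lq: "?l q < ?k" and lp: "?l p < ?k"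
      using block_leader_less by auto
    show "(\<Sum>is\<in>T. (u is q - u is p)^2) - (\<Sum>is\<in>T. (u is q - v is p)^2)
        - (\<Sum>is\<in>T. (v is q - u is p)^2) + (\<Sum>is\<in>T. (v is q - v is p)^2)
      = - D * (of_bool (?l q = ?l p) - of_bool (?l q = p) - of_bool (q = ?l p) + of_bool (q = p))"
      unfolding u_def v_def T_def D_def
      using sum_index_tuples_sq_diff[OF lq lp assms(3), of x] sum_index_tuples_sq_diff[OF lq p assms(3), of x]
        sum_index_tuples_sq_diff[OF q lp assms(3), of x] sum_index_tuples_sq_diff[OF q p assms(3), of x]
      by (simp add: of_bool_def algebra_simps)
  qed
  also have "\<dots> = - D * (\<Sum>q<?k. \<Sum>p<?k. of_bool (?l q = ?l p) - of_bool (?l q = p)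
      - of_bool (q = ?l p) + of_bool (q = p))"
    by (simp add: sum_distrib_left)
  also have "\<dots> = - D * ((\<Sum>kj\<leftarrow>ks. real kj ^ 2) - real ?k)"
    using sum_block_leader_pattern[OF assms(1)] by simp
  finally show ?thesis unfolding D_def by simp
qed

section \<open>The generator applied to V\<close>

lemma L0_Vfun:
  fixes x :: "nat \<Rightarrow> real"
  assumes "integrable \<rho> (\<lambda>z::real. z)" "integrable \<rho> (\<lambda>z::real. z^2)" "N \<ge> 2"
  shows "L0 \<alpha> \<rho> N (Vfun N) x = \<alpha> * (\<integral>z. z^2 \<partial>\<rho>)"
proof -
  let ?S = "{1..N}"
  define A where "A = (\<lambda>i. real N * x i - (\<Sum>m\<in>?S. x m))"
  define c1 where "c1 = (\<lambda>i. 2 * A i / (real N * (real N - 1)))"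
  define c2 where "c2 = 1 / real N"
  have NN: "real N * (real N - 1) \<noteq> 0" using assms(3) by simp
  have pt: "Vfun N (x(i := x i + z)) - Vfun N x = c1 i * z + c2 * z^2" if i: "i \<in> ?S" for i z
  proof -
    have "Vfun N (x(i := x i + z)) - Vfun N x = (sq_diff_sum N (x(i := x i + z)) - sq_diff_sum N x) / (2 * (real N * (real N - 1)))"
      unfolding Vfun_eq_sq_diff_sum by (simp add: diff_divide_distrib)
    also have "\<dots> = (4 * z * A i + 2 * (real N - 1) * z^2) / (2 * (real N * (real N - 1)))"
      unfolding sq_diff_sum_update[OF i] A_def by simp
    also have "\<dots> = c1 i * z + c2 * z^2"
      unfolding c1_def c2_def using NN assms(3) by (simp add: field_simps)
    finally show ?thesis .
  qed
  have "L0 \<alpha> \<rho> N (Vfun N) x = \<alpha> * (\<Sum>i\<in>?S. c1 i * (\<integral>z. z \<partial>\<rho>) + c2 * (\<integral>z. z^2 \<partial>\<rho>))"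
    unfolding L0_def
  proof (intro arg_cong[where f="\<lambda>t. \<alpha> * t"] sum.cong refl)
    fix i assume i: "i \<in> ?S"
    have "(\<integral>z. (Vfun N (x(i := x i + z)) - Vfun N x) \<partial>\<rho>) = (\<integral>z. c1 i * z + c2 * z^2 \<partial>\<rho>)"
      using pt[OF i] by simp
    also have "\<dots> = c1 i * (\<integral>z. z \<partial>\<rho>) + c2 * (\<integral>z. z^2 \<partial>\<rho>)"
      using assms(1,2) by simp
    finally show "(\<integral>z. (Vfun N (x(i := x i + z)) - Vfun N x) \<partial>\<rho>) = c1 i * (\<integral>z. z \<partial>\<rho>) + c2 * (\<integral>z. z^2 \<partial>\<rho>)" .
  qed
  also have "(\<Sum>i\<in>?S. c1 i * (\<integral>z. z \<partial>\<rho>) + c2 * (\<integral>z. z^2 \<partial>\<rho>)) =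
     (\<Sum>i\<in>?S. c1 i) * (\<integral>z. z \<partial>\<rho>) + real N * c2 * (\<integral>z. z^2 \<partial>\<rho>)"
    by (simp add: sum.distrib sum_distrib_right)
  also have "(\<Sum>i\<in>?S. c1 i) = 0"
  proof -
    have "(\<Sum>i\<in>?S. A i) = 0" unfolding A_def by (simp add: sum_subtractf sum_distrib_left)
    then show ?thesis unfolding c1_def by (simp add: sum_divide_distrib[symmetric] sum_distrib_left[symmetric])
  qed
  also have "real N * c2 = 1" unfolding c2_def using assms(3) by simp
  finally show ?thesis by simp
qed

lemma Ls_Vfun:
  assumes "\<forall>kj\<in>set ks. kj > 0" "sum_list ks \<ge> 2" "sum_list ks \<le> N"
  shows "Ls \<delta> ks N (Vfun N) x
    = - \<delta> * ((\<Sum>kj\<leftarrow>ks. real kj ^ 2) - real (sum_list ks)) / (real N * (real N - 1)) * Vfun N x"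
proof -
  define T where "T = index_tuples N (sum_list ks)"
  define \<kappa> where "\<kappa> = (\<Sum>kj\<leftarrow>ks. real kj ^ 2) - real (sum_list ks)"
  define d where "d = real N * (real N - 1)"
  have N2: "N \<ge> 2" using assms(2,3) by simp
  have card_T: "(\<Prod>i<sum_list ks. N - i) = card T"
    unfolding T_def using card_index_tuples[OF assms(3)] by simp
  moreover have "(\<Prod>i<sum_list ks. N - i) > 0" using assms(3) by (intro prod_pos) auto
  ultimately have "card T > 0" by simp
  have "d > 0" unfolding d_def using N2 by simp
  have V: "Vfun N y = sq_diff_sum N y / (2 * d)" for y
    unfolding Vfun_eq_sq_diff_sum d_def ..
  have "(\<Sum>is\<in>T. Vfun N (sync_map ks is x) - Vfun N x)
      = ((\<Sum>is\<in>T. sq_diff_sum N (sync_map ks is x)) - real (card T) * sq_diff_sum N x) / (2 * d)"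
    unfolding V by (simp add: sum_subtractf sum_divide_distrib[symmetric] diff_divide_distrib)
  also have "\<dots> = - \<kappa> * real (card T) / d * Vfun N x"
    using sum_sq_diff_sum_sync_map[OF assms(1,2) N2, of x]
    unfolding T_def[symmetric] \<kappa>_def[symmetric] d_def[symmetric] V by simp
  finally show ?thesis
    unfolding Ls_def card_T T_def[symmetric] \<kappa>_def[symmetric] d_def[symmetric]
    using \<open>card T > 0\<close> \<open>d > 0\<close> by (simp add: field_simps)
qed

lemma integrable_power_of_compact_support:
  fixes \<rho> :: "real measure"
  assumes "finite_measure \<rho>" "sets \<rho> = sets borel" "compact K" "emeasure \<rho> (UNIV - K) = 0"
  shows "integrable \<rho> (\<lambda>z. z ^ n)"
proof -
  obtain B where B: "\<forall>z\<in>K. norm z \<le> B"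
    using compact_imp_bounded[OF assms(3)] bounded_iff by blast
  have "UNIV - K \<in> sets \<rho>"
    using compact_imp_closed[OF assms(3)] assms(2) by (simp add: open_Diff)
  then have "AE z in \<rho>. z \<in> K"
    using assms(4) by (intro AE_I'[of "UNIV - K"]) (auto simp: null_sets_def)
  then have "AE z in \<rho>. norm (z ^ n) \<le> B ^ n"
  proof eventually_elim
    case (elim z)
    with B have "\<bar>z\<bar> \<le> B" by simp
    then show ?case by (simp add: power_abs power_mono)
  qed
  moreover have "(\<lambda>z. z ^ n) \<in> borel_measurable \<rho>"
    unfolding measurable_cong_sets[OF assms(2) refl] by simp
  ultimately show ?thesis
    by (rule finite_measure.integrable_const_bound[OF assms(1)])
qed

lemma sum_list_less_sum_list_squares:
  assumes "\<forall>kj\<in>set ks. kj \<ge> 2" "ks \<noteq> []"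
  shows "real (sum_list ks) < (\<Sum>kj\<leftarrow>ks. real kj ^ 2)"
proof -
  have "(\<Sum>kj\<leftarrow>ks. 2 * real kj) \<le> (\<Sum>kj\<leftarrow>ks. real kj ^ 2)"
  proof (rule sum_list_mono)
    fix kj assume "kj \<in> set ks"
    then have "2 \<le> real kj" using assms(1) by auto
    then show "2 * real kj \<le> real kj ^ 2"
      by (simp add: power2_eq_square mult_right_mono)
  qed
  moreover have "0 < sum_list ks"
    using assms by (cases ks) auto
  ultimately show ?thesis by (simp add: sum_list_const_mult sum_list_of_nat)
qed

theorem lemma2:
  fixes ks :: "nat list" and k N :: nat and \<alpha> \<delta> :: real and \<rho> :: "real measure"
  assumes "k \<ge> 2" and "\<forall>kj\<in>set ks. kj \<ge> 2" and "sum_list ks = k"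
    and "N \<ge> k"
    and "\<alpha> > 0" and "\<delta> > 0"
    and "prob_space \<rho>" and "sets \<rho> = sets borel"
    and "\<exists>K. compact K \<and> emeasure \<rho> (UNIV - K) = 0"
    and "(\<integral>z. z^2 \<partial>\<rho>) > 0"
  shows "(\<Sum>kj\<leftarrow>ks. real kj ^ 2) - real k > 0 \<and>
    (\<forall>x. gen \<alpha> \<delta> \<rho> ks N (Vfun N) x =
       \<alpha> * (\<integral>z. z^2 \<partial>\<rho>) - \<delta> * ((\<Sum>kj\<leftarrow>ks. real kj ^ 2) - real k)
          / (real N * (real N - 1)) * Vfun N x)"
proof -
  have pos: "\<forall>kj\<in>set ks. kj > 0" using assms(2) by fastforce
  have "ks \<noteq> []" using assms(1,3) by auto
  obtain K where K: "compact K" "emeasure \<rho> (UNIV - K) = 0" using assms(9) by blast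
  have "finite_measure \<rho>" using assms(7) by (rule prob_space.finite_measure)
  note integrable = integrable_power_of_compact_support[OF this assms(8) K]
  have "integrable \<rho> (\<lambda>z. z)" using integrable[of 1] by simp
  from L0_Vfun[OF this integrable[of 2]] Ls_Vfun[OF pos] assms(1,3,4)
  have "gen \<alpha> \<delta> \<rho> ks N (Vfun N) x =
       \<alpha> * (\<integral>z. z^2 \<partial>\<rho>) - \<delta> * ((\<Sum>kj\<leftarrow>ks. real kj ^ 2) - real k)
          / (real N * (real N - 1)) * Vfun N x" for x
    unfolding gen_def by simp
  with sum_list_less_sum_list_squares[OF assms(2) \<open>ks \<noteq> []\<close>] assms(3) show ?thesis by simp
qed

end
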